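(* Let $S$ be a finite alphabet, $X = S^{\mathbb{Z}}$ the full shift, and $f : X \to X$ a cellular automaton. Then the language of the asymptotic set $\mathcal{A}(f)$ is a $\Sigma^1_1$ set (identifying $S^*$ with $\mathbb{N}$ via a computable bijection).
   Context: A cellular automaton on $X = S^{\mathbb{Z}}$ (with the product topology) is a continuous map $f: X\to X$ commuting with the shift. The asymptotic set of $f$ is $\mathcal{A}(f) = \bigcup_{x \in X} \bigcap_{n \in \mathbb{N}} \overline{\bigcup_{k \geq n} \{f^k(x)\}}$, i.e. the union over all $x$ of the sets of limit points of the orbit of $x$. The language of a (not necessarily closed) set $Y \subseteq S^{\mathbb{Z}}$ is the set of words $w \in S^*$ such that $w = y_{[0,k-1]}$ for some $y \in Y$ and $k \in \mathbb{N}$. A set $P \subseteq \mathbb{N}$ is $\Sigma^1_1$ if it is definable by a formula with one existential set quantifier, no universal set quantifier and arbitrary number quantifiers; equivalently $w \in P \iff (\exists C \subseteq \mathbb{N})(\forall m \in \mathbb{N})(\exists \ell \in \mathbb{N}) R(C,m,\ell,w)$ for a recursive predicate $R$. *)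

theory Defs
  imports "HOL-Analysis.Analysis" "HOL-Library.Nat_Bijection"
begin

definition shift_topology :: "(int \<Rightarrow> 'a) topology" where
  "shift_topology = product_topology (\<lambda>_. discrete_topology (UNIV :: 'a set)) UNIV"

definition shift :: "(int \<Rightarrow> 'a) \<Rightarrow> (int \<Rightarrow> 'a)" where
  "shift x = (\<lambda>i. x (i + 1))"

definition cellular_automaton :: "((int \<Rightarrow> 'a) \<Rightarrow> (int \<Rightarrow> 'a)) \<Rightarrow> bool" where
  "cellular_automaton f \<longleftrightarrow>
     continuous_map shift_topology shift_topology f \<and> f \<circ> shift = shift \<circ> f"

definition asymptotic_set :: "((int \<Rightarrow> 'a) \<Rightarrow> (int \<Rightarrow> 'a)) \<Rightarrow> (int \<Rightarrow> 'a) set" where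
  "asymptotic_set f =
     (\<Union>x. \<Inter>n. shift_topology closure_of (\<Union>k\<in>{n..}. {(f ^^ k) x}))"

definition language :: "(int \<Rightarrow> 'a) set \<Rightarrow> 'a list set" where
  "language Y = {w. \<exists>y\<in>Y. \<exists>k::nat. w = map (\<lambda>i. y (int i)) [0..<k]}"

datatype recf = Zf | Sf | Proj nat | Comp recf "recf list" | PrimRec recf recf | Mn recf | Orc

lemma list_all2_mono_ind [mono]:
  "(\<And>x y. P x y \<longrightarrow> Q x y) \<Longrightarrow> list_all2 P xs ys \<longrightarrow> list_all2 Q xs ys"
  by (auto intro: list_all2_mono)

inductive eval :: "nat set \<Rightarrow> recf \<Rightarrow> nat list \<Rightarrow> nat \<Rightarrow> bool" for C where
  ev_Z: "eval C Zf xs 0"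
| ev_S: "eval C Sf (x # xs) (Suc x)"
| ev_Proj: "i < length xs \<Longrightarrow> eval C (Proj i) xs (xs ! i)"
| ev_Comp: "list_all2 (\<lambda>g y. eval C g xs y) gs ys \<Longrightarrow> eval C f ys z \<Longrightarrow> eval C (Comp f gs) xs z"
| ev_PR0: "eval C f xs y \<Longrightarrow> eval C (PrimRec f g) (0 # xs) y"
| ev_PRS: "eval C (PrimRec f g) (n # xs) y \<Longrightarrow> eval C g (y # n # xs) z \<Longrightarrow>
           eval C (PrimRec f g) (Suc n # xs) z"
| ev_Mn: "eval C f (n # xs) 0 \<Longrightarrow> (\<forall>i<n. \<exists>y. eval C f (i # xs) y \<and> y \<noteq> 0) \<Longrightarrow>
          eval C (Mn f) xs n"
| ev_Orc: "eval C Orc (x # xs) (if x \<in> C then 1 else 0)"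

definition recursive_pred :: "(nat set \<Rightarrow> nat \<Rightarrow> nat \<Rightarrow> nat \<Rightarrow> bool) \<Rightarrow> bool" where
  "recursive_pred R \<longleftrightarrow>
     (\<exists>t. \<forall>C m l w. eval C t [m, l, w] (if R C m l w then 1 else 0))"

definition Sigma11 :: "nat set \<Rightarrow> bool" where
  "Sigma11 P \<longleftrightarrow> (\<exists>R. recursive_pred R \<and>
     (\<forall>w. w \<in> P \<longleftrightarrow> (\<exists>C::nat set. \<forall>m. \<exists>l. R C m l w)))"

definition word_code :: "('a \<Rightarrow> nat) \<Rightarrow> 'a list \<Rightarrow> nat" where
  "word_code enc w = list_encode (map enc w)"

end

theory Submission
  imports Defs
begin

text \<open>A word \<open>u\<close> lies in the language of the asymptotic set iff some orbit shows \<open>u\<close> at the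
  positions \<open>[0, |u|)\<close> infinitely often (compactness of the full shift). The space-time diagram of
  an orbit can be listed as a set \<open>C\<close> of naturals, and since a cellular automaton has a finite
  radius, \<open>C\<close> describes an orbit iff it passes countably many local checks, each decidable
  relative to \<open>C\<close>. Hence the code \<open>w\<close> of \<open>u\<close> is in the language iff there is \<open>C\<close> such that for every
  \<open>m\<close> the first checks hold and some row \<open>l \<ge> m\<close> of the diagram starts with \<open>u\<close>. The checks are
  programmed in a small language of primitive recursive expressions with an oracle for \<open>C\<close>,
  which compiles to the oracle programs of the definition.\<close>

section \<open>Primitive recursive expressions with an oracle\<close>

datatype expr = Var nat | Zero | Succ expr | Oracle expr | Rec expr expr expr

text \<open>Variables are de Bruijn indices into an environment list; the step \<open>e\<close> of \<open>Rec n e0 e\<close>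
  sees the previous value as \<open>Var 0\<close> and the counter as \<open>Var 1\<close>. A variable out of range reads
  as \<open>0\<close>, which is also what its compiled form \<open>Zf\<close> computes, so no well-formedness condition is
  needed.\<close>

fun val :: "nat set \<Rightarrow> nat list \<Rightarrow> expr \<Rightarrow> nat" where
  "val C env (Var i) = (if i < length env then env ! i else 0)"
| "val C env Zero = 0"
| "val C env (Succ e) = Suc (val C env e)"
| "val C env (Oracle e) = of_bool (val C env e \<in> C)"
| "val C env (Rec n e0 e) = rec_nat (val C env e0) (\<lambda>k y. val C (y # k # env) e) (val C env n)"

fun compile :: "nat \<Rightarrow> expr \<Rightarrow> recf" where
  "compile n (Var i) = (if i < n then Proj i else Zf)"
| "compile n Zero = Zf"
| "compile n (Succ e) = Comp Sf [compile n e]"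
| "compile n (Oracle e) = Comp Orc [compile n e]"
| "compile n (Rec m e0 e) =
     Comp (PrimRec (compile n e0) (compile (Suc (Suc n)) e)) (compile n m # map Proj [0..<n])"

lemma eval_PrimRec_rec_nat:
  assumes "eval C f xs a" and "\<And>k y. eval C g (y # k # xs) (h k y)"
  shows "eval C (PrimRec f g) (n # xs) (rec_nat a h n)"
  by (induction n) (use assms in \<open>auto intro: eval.ev_PR0 eval.ev_PRS\<close>)

lemma eval_compile: "length env = n \<Longrightarrow> eval C (compile n e) env (val C env e)"
proof (induction e arbitrary: n env)
  case (Var i)
  then show ?case by (auto intro: eval.ev_Proj eval.ev_Z)
next
  case Zero
  then show ?case by (auto intro: eval.ev_Z)
next
  case (Succ e)
  then show ?case
    by (auto intro!: eval.ev_Comp[where ys="[val C env e]"] eval.ev_S[where xs="[]", simplified])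
next
  case (Oracle e)
  then show ?case
    using eval.ev_Orc[of C "val C env e" "[]"]
    by (auto intro!: eval.ev_Comp[where ys="[val C env e]"])
next
  case (Rec m e0 e)
  have "list_all2 (\<lambda>g y. eval C g env y) (map Proj [0..<n]) env"
    using Rec.prems by (auto simp: list_all2_conv_all_nth intro: eval.ev_Proj)
  moreover have "eval C (PrimRec (compile n e0) (compile (Suc (Suc n)) e)) (val C env m # env)
      (val C env (Rec m e0 e))"
    using Rec.IH(2)[OF Rec.prems] Rec.IH(3)[of "_ # _ # env"] Rec.prems
    by (auto intro: eval_PrimRec_rec_nat)
  ultimately show ?case
    using Rec by (auto intro!: eval.ev_Comp)
qed

lemma recursive_pred_if_val:
  assumes "\<And>C m l w. val C [m, l, w] e = of_bool (R C m l w)"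
  shows "recursive_pred R"
  unfolding recursive_pred_def
proof (intro exI allI)
  fix C m l w
  show "eval C (compile 3 e) [m, l, w] (if R C m l w then 1 else 0)"
    using eval_compile[of "[m, l, w]" 3 C e] unfolding assms of_bool_def by simp
qed

fun lift :: "nat \<Rightarrow> expr \<Rightarrow> expr" where
  "lift c (Var i) = Var (if i < c then i else Suc i)"
| "lift c Zero = Zero"
| "lift c (Succ e) = Succ (lift c e)"
| "lift c (Oracle e) = Oracle (lift c e)"
| "lift c (Rec n e0 e) = Rec (lift c n) (lift c e0) (lift (Suc (Suc c)) e)"

lemma val_lift: "length pre = c \<Longrightarrow> val C (pre @ x # env) (lift c e) = val C (pre @ env) e"
proof (induction e arbitrary: pre c)
  case (Var i)
  then show ?case by (auto simp: nth_append)
next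
  case (Rec n e0 e)
  have "val C (y # k # pre @ x # env) (lift (Suc (Suc c)) e) = val C (y # k # pre @ env) e" for y k
    using Rec.IH(3)[of "y # k # pre"] Rec.prems by simp
  then show ?case using Rec.IH(1,2)[of pre] Rec.prems by simp
qed auto

lemma val_lift_0 [simp]: "val C (x # env) (lift 0 e) = val C env e"
  using val_lift[of "[]" 0 C x env e] by simp

definition num_expr :: "nat \<Rightarrow> expr" where
  "num_expr n = (Succ ^^ n) Zero"

lemma val_num_expr [simp]: "val C env (num_expr n) = n"
  by (induction n) (auto simp: num_expr_def)

definition pred_expr :: "expr \<Rightarrow> expr" where
  "pred_expr e = Rec e Zero (Var 1)"

lemma val_pred_expr [simp]: "val C env (pred_expr e) = val C env e - 1"
  unfolding pred_expr_def by (cases "val C env e") auto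

definition add_expr :: "expr \<Rightarrow> expr \<Rightarrow> expr" where
  "add_expr a b = Rec b a (Succ (Var 0))"

lemma val_add_expr [simp]: "val C env (add_expr a b) = val C env a + val C env b"
proof -
  have "rec_nat x (\<lambda>k. Suc) n = x + n" for x n by (induction n) auto
  then show ?thesis by (simp add: add_expr_def)
qed

definition sub_expr :: "expr \<Rightarrow> expr \<Rightarrow> expr" where
  "sub_expr a b = Rec b a (pred_expr (Var 0))"

lemma val_sub_expr [simp]: "val C env (sub_expr a b) = val C env a - val C env b"
proof -
  have "rec_nat x (\<lambda>k y. y - 1) n = x - n" for x n by (induction n) auto
  then show ?thesis by (simp add: sub_expr_def)
qed

definition sum_below :: "expr \<Rightarrow> expr \<Rightarrow> expr" where
  "sum_below b e = Rec b Zero (add_expr (Var 0) (lift 0 e))"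

lemma val_sum_below [simp]: "val C env (sum_below b e) = (\<Sum>j<val C env b. val C (j # env) e)"
proof -
  have "rec_nat 0 (\<lambda>j y. y + val C (j # env) e) n = (\<Sum>j<n. val C (j # env) e)" for n
    by (induction n) auto
  then show ?thesis by (simp add: sum_below_def)
qed

definition mult_expr :: "expr \<Rightarrow> expr \<Rightarrow> expr" where
  "mult_expr a b = sum_below b (lift 0 a)"

lemma val_mult_expr [simp]: "val C env (mult_expr a b) = val C env a * val C env b"
  by (simp add: mult_expr_def)

definition not_expr :: "expr \<Rightarrow> expr" where
  "not_expr a = sub_expr (num_expr 1) a"

lemma val_not_expr [simp]: "val C env (not_expr a) = of_bool (val C env a = 0)"
  by (simp add: not_expr_def)

definition or_expr :: "expr \<Rightarrow> expr \<Rightarrow> expr" where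
  "or_expr a b = not_expr (not_expr (add_expr a b))"

lemma val_or_expr [simp]: "val C env (or_expr a b) = of_bool (val C env a \<noteq> 0 \<or> val C env b \<noteq> 0)"
  by (simp add: or_expr_def)

definition and_expr :: "expr \<Rightarrow> expr \<Rightarrow> expr" where
  "and_expr a b = not_expr (or_expr (not_expr a) (not_expr b))"

lemma val_and_expr [simp]: "val C env (and_expr a b) = of_bool (val C env a \<noteq> 0 \<and> val C env b \<noteq> 0)"
  by (simp add: and_expr_def)

definition eq_expr :: "expr \<Rightarrow> expr \<Rightarrow> expr" where
  "eq_expr a b = not_expr (add_expr (sub_expr a b) (sub_expr b a))"

lemma val_eq_expr [simp]: "val C env (eq_expr a b) = of_bool (val C env a = val C env b)"
  by (auto simp: eq_expr_def)

definition le_expr :: "expr \<Rightarrow> expr \<Rightarrow> expr" where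
  "le_expr a b = not_expr (sub_expr a b)"

lemma val_le_expr [simp]: "val C env (le_expr a b) = of_bool (val C env a \<le> val C env b)"
  by (simp add: le_expr_def)

definition all_below :: "expr \<Rightarrow> expr \<Rightarrow> expr" where
  "all_below b e = not_expr (sum_below b (not_expr e))"

lemma val_all_below [simp]:
  "val C env (all_below b e) = of_bool (\<forall>j<val C env b. val C (j # env) e \<noteq> 0)"
  by (auto simp: all_below_def simp del: sum_of_bool_eq)

definition ex_below :: "expr \<Rightarrow> expr \<Rightarrow> expr" where
  "ex_below b e = not_expr (not_expr (sum_below b e))"

lemma val_ex_below [simp]:
  "val C env (ex_below b e) = of_bool (\<exists>j<val C env b. val C (j # env) e \<noteq> 0)"
  by (simp add: ex_below_def)

definition mem_expr :: "nat set \<Rightarrow> expr \<Rightarrow> expr" where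
  "mem_expr S x = foldr (\<lambda>s. or_expr (eq_expr x (num_expr s))) (sorted_list_of_set S) Zero"

lemma val_mem_expr [simp]: "finite S \<Longrightarrow> val C env (mem_expr S x) = of_bool (val C env x \<in> S)"
proof -
  have "val C env (foldr (\<lambda>s. or_expr (eq_expr x (num_expr s))) ss Zero) = of_bool (val C env x \<in> set ss)"
    for ss by (induction ss) auto
  then show "finite S \<Longrightarrow> ?thesis" by (simp add: mem_expr_def)
qed

definition pair_expr :: "expr \<Rightarrow> expr \<Rightarrow> expr" where
  "pair_expr a b = add_expr (sum_below (Succ (add_expr a b)) (Var 0)) a"

lemma val_pair_expr [simp]: "val C env (pair_expr a b) = prod_encode (val C env a, val C env b)"
proof -
  have "triangle n = (\<Sum>j<Suc n. j)" for n by (induction n) auto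
  then show ?thesis by (simp add: pair_expr_def prod_encode_def)
qed

definition rev_list_expr :: "expr \<Rightarrow> expr \<Rightarrow> expr" where
  "rev_list_expr q e = Rec q Zero (Succ (pair_expr (lift 0 e) (Var 0)))"

lemma val_rev_list_expr [simp]:
  "val C env (rev_list_expr q e) = list_encode (rev (map (\<lambda>j. val C (j # env) e) [0..<val C env q]))"
proof -
  have "rec_nat 0 (\<lambda>j y. Suc (prod_encode (val C (j # env) e, y))) n
      = list_encode (rev (map (\<lambda>j. val C (j # env) e) [0..<n]))" for n
    by (induction n) auto
  then show ?thesis by (simp add: rev_list_expr_def)
qed

section \<open>Cellular automata on the full shift\<close>

lemma topspace_shift_topology [simp]: "topspace shift_topology = UNIV"
  by (simp add: shift_topology_def)

lemma compact_space_shift_topology: "compact_space (shift_topology :: (int \<Rightarrow> 'a::finite) topology)"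
  by (simp add: shift_topology_def compact_space_product_topology compact_space_discrete_topology)

lemma openin_shift_topology_cylinder:
  assumes "finite J"
  shows "openin shift_topology {y. \<forall>i\<in>J. y i = z i}"
proof -
  define X where "X i = (if i \<in> J then {z i} else UNIV)" for i
  have "openin (product_topology (\<lambda>_. discrete_topology UNIV) UNIV) (\<Pi>\<^sub>E i\<in>UNIV. X i)"
    by (rule product_topology_basis) (use assms in \<open>auto simp: X_def intro: finite_subset\<close>)
  moreover have "(\<Pi>\<^sub>E i\<in>UNIV. X i) = {y. \<forall>i\<in>J. y i = z i}"
    by (auto simp: X_def PiE_def Pi_def)
  ultimately show ?thesis by (simp add: shift_topology_def)
qed

lemma openin_shift_topology_contains_cylinder:
  assumes "openin shift_topology U" and "z \<in> U"
  shows "\<exists>n::nat. {y. \<forall>i. \<bar>i\<bar> \<le> int n \<longrightarrow> y i = z i} \<subseteq> U"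
proof -
  obtain X where X: "z \<in> (\<Pi>\<^sub>E i\<in>UNIV. X i)" "finite {i. X i \<noteq> UNIV}" "(\<Pi>\<^sub>E i\<in>UNIV. X i) \<subseteq> U"
    using product_topology_open_contains_basis[OF assms[unfolded shift_topology_def]] by auto
  define n where "n = (\<Sum>i | X i \<noteq> UNIV. nat \<bar>i\<bar>)"
  have "y \<in> (\<Pi>\<^sub>E i\<in>UNIV. X i)" if "\<forall>i. \<bar>i\<bar> \<le> int n \<longrightarrow> y i = z i" for y
  proof -
    have "y i \<in> X i" for i
    proof (cases "X i = UNIV")
      case False
      then have "nat \<bar>i\<bar> \<le> n"
        unfolding n_def by (intro member_le_sum) (use X(2) in auto)
      then show ?thesis using that X(1) by auto
    qed simp
    then show ?thesis by auto
  qed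
  then show ?thesis using X(3) by blast
qed

lemma finite_cylinder_cover:
  fixes N :: "(int \<Rightarrow> 'a::finite) \<Rightarrow> nat"
  shows "\<exists>r. \<forall>y. \<exists>z. N z \<le> r \<and> (\<forall>i. \<bar>i\<bar> \<le> int (N z) \<longrightarrow> y i = z i)"
proof -
  define cyl where "cyl z = {y. \<forall>i. \<bar>i\<bar> \<le> int (N z) \<longrightarrow> y i = z i}" for z :: "int \<Rightarrow> 'a"
  have "openin shift_topology (cyl z)" for z
  proof -
    have "cyl z = {y. \<forall>i\<in>{-int (N z)..int (N z)}. y i = z i}"
      by (auto simp: cyl_def abs_le_iff)
    then show ?thesis by (simp add: openin_shift_topology_cylinder)
  qed
  moreover have "compactin shift_topology (UNIV :: (int \<Rightarrow> 'a) set)"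
    using compact_space_shift_topology by (simp add: compact_space_def)
  moreover have cover: "UNIV \<subseteq> \<Union>(range cyl)"
    by (auto simp: cyl_def)
  ultimately obtain F where F: "finite F" "F \<subseteq> range cyl" "UNIV \<subseteq> \<Union>F"
    using compactinD[of shift_topology UNIV "range cyl"] by blast
  then obtain Z where Z: "finite Z" "F = cyl ` Z"
    by (meson finite_subset_image)
  have "\<exists>z. N z \<le> (\<Sum>z\<in>Z. N z) \<and> y \<in> cyl z" for y
  proof -
    obtain z where "z \<in> Z" "y \<in> cyl z"
      using F(3) Z(2) by blast
    moreover have "N z \<le> (\<Sum>z\<in>Z. N z)"
      using \<open>z \<in> Z\<close> Z(1) by (intro member_le_sum) auto
    ultimately show ?thesis by blast
  qed
  then show ?thesis
    unfolding cyl_def by blast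
qed

lemma continuous_map_discrete_uniformly_local:
  fixes g :: "(int \<Rightarrow> 'a::finite) \<Rightarrow> 'b"
  assumes "continuous_map shift_topology (discrete_topology UNIV) g"
  shows "\<exists>r::nat. \<forall>y z. (\<forall>i. \<bar>i\<bar> \<le> int r \<longrightarrow> y i = z i) \<longrightarrow> g y = g z"
proof -
  have "\<exists>n. {y. \<forall>i. \<bar>i\<bar> \<le> int n \<longrightarrow> y i = z i} \<subseteq> {y. g y = g z}" for z
  proof -
    have "\<forall>U. openin shift_topology {y. g y \<in> U}"
      using assms unfolding continuous_map_def by simp
    then have "openin shift_topology {y. g y \<in> {g z}}"
      by blast
    then show ?thesis
      by (intro openin_shift_topology_contains_cylinder) auto
  qed
  then have "\<forall>z. \<exists>n. {y. \<forall>i. \<bar>i\<bar> \<le> int n \<longrightarrow> y i = z i} \<subseteq> {y. g y = g z}" ..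
  then obtain N where N: "\<forall>z. {y. \<forall>i. \<bar>i\<bar> \<le> int (N z) \<longrightarrow> y i = z i} \<subseteq> {y. g y = g z}"
    by (rule choice[THEN exE])
  from finite_cylinder_cover[of N]
  obtain r where r: "\<forall>y. \<exists>z. N z \<le> r \<and> (\<forall>i. \<bar>i\<bar> \<le> int (N z) \<longrightarrow> y i = z i)" ..
  have "g y = g y'" if agree: "\<forall>i. \<bar>i\<bar> \<le> int r \<longrightarrow> y i = y' i" for y y'
  proof -
    from r obtain z where z: "N z \<le> r" "\<forall>i. \<bar>i\<bar> \<le> int (N z) \<longrightarrow> y i = z i"
      by blast
    have "\<forall>i. \<bar>i\<bar> \<le> int (N z) \<longrightarrow> y' i = z i"
    proof (intro allI impI)
      fix i
      assume i: "\<bar>i\<bar> \<le> int (N z)"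
      then have "y i = y' i"
        using agree z(1) by simp
      then show "y' i = z i"
        using z(2) i by simp
    qed
    then have "g y' = g z"
      using N by blast
    moreover have "g y = g z"
      using N z(2) by blast
    ultimately show ?thesis by simp
  qed
  then show ?thesis
    by blast
qed

lemma cellular_automaton_translate:
  assumes "cellular_automaton f"
  shows "f (\<lambda>i. y (i + j)) = (\<lambda>i. f y (i + j))"
proof -
  have shift_comm: "f (shift z) = shift (f z)" for z
    using assms unfolding cellular_automaton_def by (metis comp_apply)
  have nat_case: "f (\<lambda>i. y (i + int n)) = (\<lambda>i. f y (i + int n))" for n y
  proof (induction n arbitrary: y)
    case (Suc n)
    have "f (\<lambda>i. y (i + int (Suc n))) = f (\<lambda>i. (\<lambda>j. y (j + 1)) (i + int n))"
      by (simp add: ac_simps)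
    also have "\<dots> = (\<lambda>i. f (\<lambda>j. y (j + 1)) (i + int n))"
      by (rule Suc)
    also have "\<dots> = (\<lambda>i. f y (i + int (Suc n)))"
      using shift_comm[of y] by (simp add: shift_def ac_simps)
    finally show ?case .
  qed simp
  show ?thesis
  proof (cases "j \<ge> 0")
    case True
    then show ?thesis using nat_case[of y "nat j"] by simp
  next
    case False
    then have "f y = (\<lambda>i. f (\<lambda>i. y (i + j)) (i + int (nat (- j))))"
      using nat_case[of "\<lambda>i. y (i + j)" "nat (- j)"] by simp
    then show ?thesis using False by simp
  qed
qed

lemma cellular_automaton_radius:
  fixes f :: "(int \<Rightarrow> 'a::finite) \<Rightarrow> (int \<Rightarrow> 'a)"
  assumes "cellular_automaton f"
  shows "\<exists>r::nat. \<forall>y z. (\<forall>j\<le>2 * r. y (int j) = z (int j)) \<longrightarrow> f y (int r) = f z (int r)"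
proof -
  have "continuous_map shift_topology (discrete_topology UNIV) (\<lambda>y. f y 0)"
  proof (rule continuous_map_compose[of _ shift_topology f, unfolded o_def])
    show "continuous_map shift_topology shift_topology f"
      using assms by (simp add: cellular_automaton_def)
    show "continuous_map shift_topology (discrete_topology UNIV) (\<lambda>x. x 0)"
      unfolding shift_topology_def by (rule continuous_map_product_projection) simp
  qed
  then obtain r :: nat where r: "\<And>y z. \<forall>i. \<bar>i\<bar> \<le> int r \<longrightarrow> y i = z i \<Longrightarrow> f y 0 = f z 0"
    using continuous_map_discrete_uniformly_local by blast
  have "f y (int r) = f z (int r)" if "\<forall>j\<le>2 * r. y (int j) = z (int j)" for y z
  proof -
    have "y (i + int r) = z (i + int r)" if "\<bar>i\<bar> \<le> int r" for i
    proof -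
      have "nat (i + int r) \<le> 2 * r" "int (nat (i + int r)) = i + int r"
        using that by auto
      then show ?thesis using \<open>\<forall>j\<le>2 * r. _\<close> by metis
    qed
    then have "f (\<lambda>i. y (i + int r)) 0 = f (\<lambda>i. z (i + int r)) 0"
      by (intro r) auto
    then show ?thesis by (simp add: cellular_automaton_translate[OF assms])
  qed
  then show ?thesis by blast
qed

lemma closure_of_shift_topology_prefix:
  assumes "y \<in> shift_topology closure_of S"
  shows "\<exists>s\<in>S. map (\<lambda>i. s (int i)) [0..<L] = map (\<lambda>i. y (int i)) [0..<L]"
proof -
  let ?T = "{s. \<forall>i\<in>int ` {..<L}. s i = y i}"
  have "openin shift_topology ?T"
    by (rule openin_shift_topology_cylinder) simp
  moreover have "y \<in> ?T"
    by simp
  moreover have "\<forall>T. y \<in> T \<and> openin shift_topology T \<longrightarrow> (\<exists>s. s \<in> S \<and> s \<in> T)"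
    using assms by (simp add: in_closure_of)
  ultimately obtain s where "s \<in> S" "s \<in> ?T"
    by (meson spec mp conjI)
  then show ?thesis
    by (intro bexI[of _ s]) (auto simp: atLeast0LessThan)
qed

lemma asymptotic_set_prefix_recurs:
  assumes "y \<in> asymptotic_set f"
  shows "\<exists>x. \<forall>n. \<exists>k\<ge>n. map (\<lambda>i. (f ^^ k) x (int i)) [0..<L] = map (\<lambda>i. y (int i)) [0..<L]"
proof -
  obtain x where x: "\<And>n. y \<in> shift_topology closure_of (\<Union>k\<in>{n..}. {(f ^^ k) x})"
    using assms unfolding asymptotic_set_def by blast
  have "\<exists>k\<ge>n. map (\<lambda>i. (f ^^ k) x (int i)) [0..<L] = map (\<lambda>i. y (int i)) [0..<L]" for n
    using closure_of_shift_topology_prefix[OF x[of n], of L] by auto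
  then show ?thesis by blast
qed

text \<open>Compactness: the closures of the orbit tails carrying the recurring prefix are nested and
  nonempty, so they meet in a limit point that carries it too.\<close>

lemma recurring_prefix_in_asymptotic_set:
  fixes f :: "(int \<Rightarrow> 'a::finite) \<Rightarrow> (int \<Rightarrow> 'a)"
  assumes recur: "\<forall>n. \<exists>k\<ge>n. map (\<lambda>i. (f ^^ k) x (int i)) [0..<length u] = u"
  shows "\<exists>y\<in>asymptotic_set f. map (\<lambda>i. y (int i)) [0..<length u] = u"
proof -
  define S where "S n = {(f ^^ k) x | k. k \<ge> n \<and> map (\<lambda>i. (f ^^ k) x (int i)) [0..<length u] = u}"
    for n
  have "(\<Inter>n. shift_topology closure_of S n) \<noteq> {}"
  proof (rule compact_space_imp_nest[OF compact_space_shift_topology])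
    show "closedin shift_topology (shift_topology closure_of S n)" for n
      by simp
    show "shift_topology closure_of S n \<noteq> {}" for n
      using recur closure_of_subset[of "S n" shift_topology] by (fastforce simp: S_def)
    show "decseq (\<lambda>n. shift_topology closure_of S n)"
      unfolding decseq_def S_def by (intro allI impI closure_of_mono) force
  qed
  then obtain y where y: "\<And>n. y \<in> shift_topology closure_of S n"
    by blast
  have "S n \<subseteq> (\<Union>k\<in>{n..}. {(f ^^ k) x})" for n
    unfolding S_def by force
  then have "y \<in> shift_topology closure_of (\<Union>k\<in>{n..}. {(f ^^ k) x})" for n
    using y[of n] closure_of_mono by blast
  then have "y \<in> asymptotic_set f"
    unfolding asymptotic_set_def by blast
  moreover obtain s where "s \<in> S 0"
      and s_y: "map (\<lambda>i. s (int i)) [0..<length u] = map (\<lambda>i. y (int i)) [0..<length u]"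
    using closure_of_shift_topology_prefix[OF y[of 0]] by blast
  then have "map (\<lambda>i. s (int i)) [0..<length u] = u"
    unfolding S_def by blast
  then have "map (\<lambda>i. y (int i)) [0..<length u] = u"
    by (simp only: s_y)
  ultimately show ?thesis by blast
qed

lemma language_asymptotic_set_iff:
  fixes f :: "(int \<Rightarrow> 'a::finite) \<Rightarrow> (int \<Rightarrow> 'a)"
  shows "u \<in> language (asymptotic_set f) \<longleftrightarrow>
    (\<exists>x. \<forall>n. \<exists>k\<ge>n. map (\<lambda>i. (f ^^ k) x (int i)) [0..<length u] = u)"
proof
  assume "u \<in> language (asymptotic_set f)"
  then obtain y where y: "y \<in> asymptotic_set f" and u: "u = map (\<lambda>i. y (int i)) [0..<length u]"
    unfolding language_def by auto
  obtain x where
    "\<forall>n. \<exists>k\<ge>n. map (\<lambda>i. (f ^^ k) x (int i)) [0..<length u] = map (\<lambda>i. y (int i)) [0..<length u]"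
    using asymptotic_set_prefix_recurs[OF y] by blast
  then have "\<forall>n. \<exists>k\<ge>n. map (\<lambda>i. (f ^^ k) x (int i)) [0..<length u] = u"
    by (metis u)
  then show "\<exists>x. \<forall>n. \<exists>k\<ge>n. map (\<lambda>i. (f ^^ k) x (int i)) [0..<length u] = u"
    by blast
next
  assume "\<exists>x. \<forall>n. \<exists>k\<ge>n. map (\<lambda>i. (f ^^ k) x (int i)) [0..<length u] = u"
  then obtain y where y: "y \<in> asymptotic_set f" and yu: "map (\<lambda>i. y (int i)) [0..<length u] = u"
    using recurring_prefix_in_asymptotic_set by blast
  show "u \<in> language (asymptotic_set f)"
    unfolding language_def by (intro CollectI bexI[OF _ y] exI[of _ "length u"]) (simp only: yu)
qed

section \<open>Space-time diagrams coded by sets of naturals\<close>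

definition cell_code :: "nat \<Rightarrow> nat \<Rightarrow> nat \<Rightarrow> nat \<Rightarrow> nat" where
  "cell_code k a b e = prod_encode (k, prod_encode (a, prod_encode (b, e)))"

text \<open>A set \<open>C\<close> describes a space-time diagram: the cell at time \<open>k\<close> and position \<open>a - b\<close>
  holds the letter of code \<open>e < M\<close> iff \<open>cell_code k a b e \<in> C\<close>. Writing positions as differences
  of naturals keeps all arithmetic inside \<open>nat\<close>.\<close>

definition cell :: "nat \<Rightarrow> nat set \<Rightarrow> nat \<Rightarrow> nat \<Rightarrow> nat \<Rightarrow> nat" where
  "cell M C k a b = (\<Sum>e<M. e * of_bool (cell_code k a b e \<in> C))"

definition row_segment :: "nat \<Rightarrow> nat set \<Rightarrow> nat \<Rightarrow> nat \<Rightarrow> nat \<Rightarrow> nat \<Rightarrow> nat" where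
  "row_segment M C k a b q = list_encode (rev (map (\<lambda>j. cell M C k a (b + j)) [0..<q]))"

definition consistent_cell ::
    "nat \<Rightarrow> nat set \<Rightarrow> nat set \<Rightarrow> nat \<Rightarrow> nat set \<Rightarrow> nat \<Rightarrow> nat \<Rightarrow> nat \<Rightarrow> bool" where
  "consistent_cell M E G r C k a b \<longleftrightarrow>
     cell M C k a b \<in> E \<and> cell M C k a b = cell M C k (Suc a) (Suc b) \<and>
     prod_encode (row_segment M C k a b (Suc (2 * r)), cell M C (Suc k) a (b + r)) \<in> G"

text \<open>A word of length \<open>n\<close> has code at least \<open>n\<close>, so bounding \<open>n\<close> by the code \<open>w\<close> loses nothing
  and keeps the test decidable.\<close>

definition row_starts_with :: "nat \<Rightarrow> nat set \<Rightarrow> nat \<Rightarrow> nat \<Rightarrow> bool" where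
  "row_starts_with M C l w \<longleftrightarrow> (\<exists>n<Suc w. row_segment M C l n 1 n = w)"

definition diagram_test ::
    "nat \<Rightarrow> nat set \<Rightarrow> nat set \<Rightarrow> nat \<Rightarrow> nat set \<Rightarrow> nat \<Rightarrow> nat \<Rightarrow> nat \<Rightarrow> bool" where
  "diagram_test M E G r C m l w \<longleftrightarrow>
     (\<forall>k<m. \<forall>a<m. \<forall>b<m. consistent_cell M E G r C k a b) \<and> m \<le> l \<and> row_starts_with M C l w"

definition cell_expr :: "nat \<Rightarrow> expr \<Rightarrow> expr \<Rightarrow> expr \<Rightarrow> expr" where
  "cell_expr M k a b = sum_below (num_expr M) (mult_expr (Var 0)
     (Oracle (pair_expr (lift 0 k) (pair_expr (lift 0 a) (pair_expr (lift 0 b) (Var 0))))))"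

lemma val_cell_expr [simp]:
  "val C env (cell_expr M k a b) = cell M C (val C env k) (val C env a) (val C env b)"
  by (simp add: cell_expr_def cell_def cell_code_def)

definition row_segment_expr :: "nat \<Rightarrow> expr \<Rightarrow> expr \<Rightarrow> expr \<Rightarrow> expr \<Rightarrow> expr" where
  "row_segment_expr M k a b q =
     rev_list_expr q (cell_expr M (lift 0 k) (lift 0 a) (add_expr (lift 0 b) (Var 0)))"

lemma val_row_segment_expr [simp]: "val C env (row_segment_expr M k a b q) =
    row_segment M C (val C env k) (val C env a) (val C env b) (val C env q)"
  by (simp add: row_segment_expr_def row_segment_def)

definition consistent_cell_expr ::
    "nat \<Rightarrow> nat set \<Rightarrow> nat set \<Rightarrow> nat \<Rightarrow> expr \<Rightarrow> expr \<Rightarrow> expr \<Rightarrow> expr" where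
  "consistent_cell_expr M E G r k a b =
     and_expr (mem_expr E (cell_expr M k a b))
      (and_expr (eq_expr (cell_expr M k a b) (cell_expr M k (Succ a) (Succ b)))
        (mem_expr G (pair_expr (row_segment_expr M k a b (num_expr (Suc (2 * r))))
                               (cell_expr M (Succ k) a (add_expr b (num_expr r))))))"

lemma val_consistent_cell_expr [simp]:
  "finite E \<Longrightarrow> finite G \<Longrightarrow> val C env (consistent_cell_expr M E G r k a b) =
     of_bool (consistent_cell M E G r C (val C env k) (val C env a) (val C env b))"
  by (simp add: consistent_cell_expr_def consistent_cell_def)

text \<open>Evaluated at \<open>[m, l, w]\<close>; each binder shifts the indices of \<open>m, l, w\<close> by one.\<close>

definition diagram_test_expr :: "nat \<Rightarrow> nat set \<Rightarrow> nat set \<Rightarrow> nat \<Rightarrow> expr" where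
  "diagram_test_expr M E G r =
     and_expr (all_below (Var 0) (all_below (Var 1) (all_below (Var 2)
         (consistent_cell_expr M E G r (Var 2) (Var 1) (Var 0)))))
      (and_expr (le_expr (Var 0) (Var 1))
        (ex_below (Succ (Var 2)) (eq_expr (row_segment_expr M (Var 2) (Var 0) (num_expr 1) (Var 0)) (Var 3))))"

lemma recursive_diagram_test:
  assumes "finite E" and "finite G"
  shows "recursive_pred (diagram_test M E G r)"
proof (rule recursive_pred_if_val)
  fix C m l w
  show "val C [m, l, w] (diagram_test_expr M E G r) = of_bool (diagram_test M E G r C m l w)"
    using assms
    by (simp add: diagram_test_expr_def diagram_test_def row_starts_with_def eq_commute[of w])
qed

lemma length_le_list_encode: "length xs \<le> list_encode xs"
  by (induction xs) (auto intro: le_trans[OF _ le_prod_encode_2])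

lemma word_code_eq_iff: "inj enc \<Longrightarrow> word_code enc u = word_code enc v \<longleftrightarrow> u = v"
  by (simp add: word_code_def list_encode_eq inj_map_eq_map)

lemma rev_map_downwards:
  "rev (map (\<lambda>j. Y (i - int j)) [0..<q]) = map (\<lambda>j. Y (i - int q + 1 + int j)) [0..<q]"
proof (induction q)
  case (Suc q)
  have "map (\<lambda>j. Y (i - int (Suc q) + 1 + int j)) [0..<Suc q]
      = Y (i - int q) # map (\<lambda>j. Y (i - int q + 1 + int j)) [0..<q]"
    by (simp add: map_upt_Suc del: upt_Suc) (simp add: algebra_simps)
  then show ?case using Suc by simp
qed simp

lemma cells_from_translation_invariant:
  assumes "\<forall>a b. h a b \<in> range enc \<and> h a b = h (Suc a) (Suc b)"
  shows "\<exists>Y. \<forall>a b. h a b = enc (Y (int a - int b))"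
proof -
  have shift: "h (a + c) (b + c) = h a b" for a b c
    by (induction c) (use assms in auto)
  have diff: "h a b = h (nat (int a - int b)) (nat (- (int a - int b)))" for a b
  proof -
    have "a = nat (int a - int b) + min a b" "b = nat (- (int a - int b)) + min a b"
      by auto
    then show ?thesis by (metis shift)
  qed
  have enc_inv: "enc (inv enc (h a b)) = h a b" for a b
    by (rule f_inv_into_f) (use assms in simp)
  have repr: "h a b = enc (inv enc (h (nat (int a - int b)) (nat (- (int a - int b)))))" for a b
    using diff[of a b] enc_inv by simp
  show ?thesis
    by (intro exI[of _ "\<lambda>i. inv enc (h (nat i) (nat (- i)))"] allI) (rule repr)
qed

definition cells_of :: "('a \<Rightarrow> nat) \<Rightarrow> (nat \<Rightarrow> int \<Rightarrow> 'a) \<Rightarrow> nat set" where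
  "cells_of enc X = {cell_code k a b (enc (X k (int a - int b))) | k a b. True}"

lemma cell_cells_of:
  assumes "\<forall>c. enc c < M"
  shows "cell M (cells_of enc X) k a b = enc (X k (int a - int b))"
proof -
  have "cell_code k a b e \<in> cells_of enc X \<longleftrightarrow> e = enc (X k (int a - int b))" for e
    by (auto simp: cells_of_def cell_code_def)
  then have "cell M (cells_of enc X) k a b = (\<Sum>e<M. if e = enc (X k (int a - int b)) then e else 0)"
    unfolding cell_def by (intro sum.cong) auto
  then show ?thesis using assms by (simp add: sum.delta)
qed

lemma row_segment_eq_word_code:
  assumes "\<And>a b. cell M C k a b = enc (Y (int a - int b))"
  shows "row_segment M C k a b q =
    word_code enc (map (\<lambda>j. Y (int a - int b - int q + 1 + int j)) [0..<q])"
proof -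
  have "rev (map (\<lambda>j. cell M C k a (b + j)) [0..<q])
      = rev (map enc (map (\<lambda>j. Y (int a - int b - int j)) [0..<q]))"
    using assms by (simp add: algebra_simps)
  also have "\<dots> = map enc (rev (map (\<lambda>j. Y (int a - int b - int j)) [0..<q]))"
    by (rule rev_map)
  finally show ?thesis
    unfolding row_segment_def word_code_def by (simp only: rev_map_downwards)
qed

definition local_table :: "('a \<Rightarrow> nat) \<Rightarrow> nat \<Rightarrow> ((int \<Rightarrow> 'a) \<Rightarrow> (int \<Rightarrow> 'a)) \<Rightarrow> nat set" where
  "local_table enc r f =
     {prod_encode (word_code enc (map (\<lambda>j. z (int j)) [0..<Suc (2 * r)]), enc (f z (int r))) | z. True}"

lemma finite_local_table: "finite (local_table enc r (f :: (int \<Rightarrow> 'a::finite) \<Rightarrow> _))"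
proof -
  have "local_table enc r f \<subseteq>
      (\<lambda>(u, c). prod_encode (word_code enc u, enc c)) ` ({u. length u = Suc (2 * r)} \<times> UNIV)"
    unfolding local_table_def by auto
  moreover have "finite {u :: 'a list. length u = Suc (2 * r)}"
    using finite_lists_length_eq[of "UNIV :: 'a set"] by simp
  then have "finite ((\<lambda>(u, c). prod_encode (word_code enc u, enc c)) ` ({u. length u = Suc (2 * r)} \<times> UNIV))"
    by (intro finite_imageI finite_cartesian_product) simp_all
  ultimately show ?thesis
    by (rule finite_subset)
qed

lemma local_table_iff:
  assumes ca: "cellular_automaton f" and "inj enc"
    and radius: "\<forall>y z. (\<forall>j\<le>2 * r. y (int j) = z (int j)) \<longrightarrow> f y (int r) = f z (int r)"
  shows "prod_encode (word_code enc (map (\<lambda>j. Y (s + int j)) [0..<Suc (2 * r)]), enc c)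
      \<in> local_table enc r f \<longleftrightarrow> c = f Y (s + int r)"
proof -
  let ?Ys = "\<lambda>i. Y (s + i)"
  have f_Ys: "f ?Ys (int r) = f Y (s + int r)"
    using cellular_automaton_translate[OF ca, of Y s] by (simp add: add.commute)
  have "prod_encode (word_code enc (map (\<lambda>j. Y (s + int j)) [0..<Suc (2 * r)]), enc c)
      \<in> local_table enc r f \<longleftrightarrow>
    (\<exists>z. map (\<lambda>j. ?Ys (int j)) [0..<Suc (2 * r)] = map (\<lambda>j. z (int j)) [0..<Suc (2 * r)]
       \<and> c = f z (int r))"
    unfolding local_table_def using \<open>inj enc\<close>
    by (simp add: word_code_eq_iff inj_eq del: upt_Suc map_eq_conv)
  also have "\<dots> \<longleftrightarrow> c = f Y (s + int r)"
  proof
    assume "\<exists>z. map (\<lambda>j. ?Ys (int j)) [0..<Suc (2 * r)] = map (\<lambda>j. z (int j)) [0..<Suc (2 * r)]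
      \<and> c = f z (int r)"
    then obtain z where z: "map (\<lambda>j. ?Ys (int j)) [0..<Suc (2 * r)] = map (\<lambda>j. z (int j)) [0..<Suc (2 * r)]"
      and c: "c = f z (int r)"
      by blast
    have "\<forall>j\<le>2 * r. z (int j) = ?Ys (int j)"
      using z unfolding map_eq_conv by (auto simp del: upt_Suc)
    then have "f z (int r) = f ?Ys (int r)"
      using radius by simp
    then show "c = f Y (s + int r)"
      using c f_Ys by simp
  next
    assume "c = f Y (s + int r)"
    then show "\<exists>z. map (\<lambda>j. ?Ys (int j)) [0..<Suc (2 * r)] = map (\<lambda>j. z (int j)) [0..<Suc (2 * r)]
      \<and> c = f z (int r)"
      using f_Ys by (intro exI[of _ ?Ys]) simp
  qed
  finally show ?thesis .
qed

lemma row_starts_with_iff: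
  assumes "\<And>a b. cell M C l a b = enc (Y (int a - int b))"
  shows "row_starts_with M C l w \<longleftrightarrow> (\<exists>u. w = word_code enc u \<and> u = map (\<lambda>i. Y (int i)) [0..<length u])"
proof -
  have segment: "row_segment M C l n 1 n = word_code enc (map (\<lambda>i. Y (int i)) [0..<n])" for n
    using row_segment_eq_word_code[where Y = Y and enc = enc, OF assms, of n 1 n] by simp
  show ?thesis
  proof
    assume "row_starts_with M C l w"
    then obtain n where "row_segment M C l n 1 n = w"
      unfolding row_starts_with_def by blast
    then show "\<exists>u. w = word_code enc u \<and> u = map (\<lambda>i. Y (int i)) [0..<length u]"
      using segment by (intro exI[of _ "map (\<lambda>i. Y (int i)) [0..<n]"]) simp
  next
    assume "\<exists>u. w = word_code enc u \<and> u = map (\<lambda>i. Y (int i)) [0..<length u]"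
    then obtain u where w: "w = word_code enc u" and u: "u = map (\<lambda>i. Y (int i)) [0..<length u]"
      by blast
    have "length u < Suc w"
      using length_le_list_encode[of "map enc u"] by (simp add: w word_code_def)
    moreover have "row_segment M C l (length u) 1 (length u) = w"
      using segment u w by metis
    ultimately show "row_starts_with M C l w"
      unfolding row_starts_with_def by blast
  qed
qed

lemma consistent_cell_of_orbit:
  assumes ca: "cellular_automaton f" and "inj enc" and M: "\<forall>c. enc c < M"
    and radius: "\<forall>y z. (\<forall>j\<le>2 * r. y (int j) = z (int j)) \<longrightarrow> f y (int r) = f z (int r)"
  shows "consistent_cell M (range enc) (local_table enc r f) r (cells_of enc (\<lambda>k. (f ^^ k) x)) k a b"
proof -
  let ?X = "\<lambda>k. (f ^^ k) x"
  let ?C = "cells_of enc ?X"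
  define s where "s = int a - int b - 2 * int r"
  have cell: "cell M ?C k' a' b' = enc (?X k' (int a' - int b'))" for k' a' b'
    by (rule cell_cells_of[OF M])
  have "int a - int b - int (Suc (2 * r)) + 1 + int j = s + int j" for j
    by (simp add: s_def)
  then have "row_segment M ?C k a b (Suc (2 * r)) = word_code enc (map (\<lambda>j. ?X k (s + int j)) [0..<Suc (2 * r)])"
    using row_segment_eq_word_code[where Y = "?X k", OF cell] by presburger
  moreover have "cell M ?C (Suc k) a (b + r) = enc (f (?X k) (s + int r))"
    by (simp add: cell s_def algebra_simps)
  ultimately have "prod_encode (row_segment M ?C k a b (Suc (2 * r)), cell M ?C (Suc k) a (b + r))
      \<in> local_table enc r f"
    using local_table_iff[OF ca \<open>inj enc\<close> radius] by simp
  then show ?thesis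
    unfolding consistent_cell_def by (simp add: cell)
qed

lemma orbit_of_consistent_cells:
  assumes ca: "cellular_automaton f" and "inj enc"
    and radius: "\<forall>y z. (\<forall>j\<le>2 * r. y (int j) = z (int j)) \<longrightarrow> f y (int r) = f z (int r)"
    and consistent: "\<forall>k a b. consistent_cell M (range enc) (local_table enc r f) r C k a b"
  shows "\<exists>x. \<forall>k a b. cell M C k a b = enc ((f ^^ k) x (int a - int b))"
proof -
  have "\<exists>Yk. \<forall>a b. cell M C k a b = enc (Yk (int a - int b))" for k
    using consistent unfolding consistent_cell_def
    by (intro cells_from_translation_invariant) simp
  then obtain Y where Y: "\<And>k a b. cell M C k a b = enc (Y k (int a - int b))"
    by metis
  have "Y (Suc k) i = f (Y k) i" for k i
  proof -
    define a where "a = nat (i + int r)"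
    define b where "b = nat (- (i + int r))"
    have ab: "int a - int b = i + int r"
      by (simp add: a_def b_def)
    have "int a - int b - int (Suc (2 * r)) + 1 + int j = i - int r + int j" for j
      using ab by simp
    then have "row_segment M C k a b (Suc (2 * r)) =
        word_code enc (map (\<lambda>j. Y k (i - int r + int j)) [0..<Suc (2 * r)])"
      using row_segment_eq_word_code[where Y = "Y k", OF Y] by presburger
    moreover have "cell M C (Suc k) a (b + r) = enc (Y (Suc k) i)"
      using Y ab by (simp add: algebra_simps)
    moreover have "prod_encode (row_segment M C k a b (Suc (2 * r)), cell M C (Suc k) a (b + r))
        \<in> local_table enc r f"
      using consistent unfolding consistent_cell_def by blast
    ultimately show ?thesis
      using local_table_iff[OF ca \<open>inj enc\<close> radius, of "Y k" "i - int r"] by simp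
  qed
  then have "Y k = (f ^^ k) (Y 0)" for k
    by (induction k) auto
  then show ?thesis
    using Y by metis
qed

lemma diagram_test_of_recurring_word:
  assumes ca: "cellular_automaton f" and "inj enc" and M: "\<forall>c. enc c < M"
    and radius: "\<forall>y z. (\<forall>j\<le>2 * r. y (int j) = z (int j)) \<longrightarrow> f y (int r) = f z (int r)"
    and recur: "\<forall>n. \<exists>k\<ge>n. map (\<lambda>i. (f ^^ k) x (int i)) [0..<length u] = u"
  shows "\<exists>C. \<forall>m. \<exists>l. diagram_test M (range enc) (local_table enc r f) r C m l (word_code enc u)"
proof -
  let ?C = "cells_of enc (\<lambda>k. (f ^^ k) x)"
  have "\<exists>l. diagram_test M (range enc) (local_table enc r f) r ?C m l (word_code enc u)" for m
  proof -
    obtain l where "m \<le> l" and l: "map (\<lambda>i. (f ^^ l) x (int i)) [0..<length u] = u"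
      using recur by blast
    have "cell M ?C l a b = enc ((f ^^ l) x (int a - int b))" for a b
      by (rule cell_cells_of[OF M])
    then have "row_starts_with M ?C l (word_code enc u)"
      using row_starts_with_iff[where Y = "(f ^^ l) x" and enc = enc] l by auto
    then show ?thesis
      unfolding diagram_test_def using \<open>m \<le> l\<close> consistent_cell_of_orbit[OF assms(1-4)] by blast
  qed
  then show ?thesis by blast
qed

lemma recurring_word_of_diagram_test:
  assumes ca: "cellular_automaton f" and "inj enc"
    and radius: "\<forall>y z. (\<forall>j\<le>2 * r. y (int j) = z (int j)) \<longrightarrow> f y (int r) = f z (int r)"
    and test: "\<forall>m. \<exists>l. diagram_test M (range enc) (local_table enc r f) r C m l w"
  shows "\<exists>u x. w = word_code enc u \<and> (\<forall>n. \<exists>k\<ge>n. map (\<lambda>i. (f ^^ k) x (int i)) [0..<length u] = u)"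
proof -
  have "consistent_cell M (range enc) (local_table enc r f) r C k a b" for k a b
  proof -
    obtain l where "diagram_test M (range enc) (local_table enc r f) r C (Suc (k + a + b)) l w"
      using test by blast
    then show ?thesis
      unfolding diagram_test_def by simp
  qed
  then obtain x where x: "\<And>k a b. cell M C k a b = enc ((f ^^ k) x (int a - int b))"
    using orbit_of_consistent_cells[OF ca \<open>inj enc\<close> radius] by blast
  have "\<exists>l\<ge>m. \<exists>u. w = word_code enc u \<and> u = map (\<lambda>i. (f ^^ l) x (int i)) [0..<length u]" for m
  proof -
    obtain l where "m \<le> l" "row_starts_with M C l w"
      using test unfolding diagram_test_def by blast
    then show ?thesis
      using row_starts_with_iff[where Y = "(f ^^ l) x" and enc = enc, OF x] by blast
  qed
  then obtain u where u: "w = word_code enc u"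
    by blast
  have "\<exists>k\<ge>n. map (\<lambda>i. (f ^^ k) x (int i)) [0..<length u] = u" for n
    using \<open>\<exists>l\<ge>n. _\<close> u word_code_eq_iff[OF \<open>inj enc\<close>] by metis
  then show ?thesis
    using u by blast
qed

lemma asymptotic_language_iff_diagram_test:
  fixes f :: "(int \<Rightarrow> 'a::finite) \<Rightarrow> (int \<Rightarrow> 'a)"
  assumes "cellular_automaton f" and "inj enc" and M: "\<forall>c. enc c < M"
    and radius: "\<forall>y z. (\<forall>j\<le>2 * r. y (int j) = z (int j)) \<longrightarrow> f y (int r) = f z (int r)"
  shows "w \<in> word_code enc ` language (asymptotic_set f) \<longleftrightarrow>
    (\<exists>C. \<forall>m. \<exists>l. diagram_test M (range enc) (local_table enc r f) r C m l w)"
proof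
  assume "w \<in> word_code enc ` language (asymptotic_set f)"
  then obtain u where "w = word_code enc u" and "u \<in> language (asymptotic_set f)"
    by blast
  then obtain x where "w = word_code enc u"
    and "\<forall>n. \<exists>k\<ge>n. map (\<lambda>i. (f ^^ k) x (int i)) [0..<length u] = u"
    unfolding language_asymptotic_set_iff by blast
  then show "\<exists>C. \<forall>m. \<exists>l. diagram_test M (range enc) (local_table enc r f) r C m l w"
    using diagram_test_of_recurring_word[OF assms] by blast
next
  assume "\<exists>C. \<forall>m. \<exists>l. diagram_test M (range enc) (local_table enc r f) r C m l w"
  then obtain u x where "w = word_code enc u"
    and "\<forall>n. \<exists>k\<ge>n. map (\<lambda>i. (f ^^ k) x (int i)) [0..<length u] = u"
    using recurring_word_of_diagram_test[OF assms(1,2) radius] by blast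
  then show "w \<in> word_code enc ` language (asymptotic_set f)"
    using language_asymptotic_set_iff[of u f] by blast
qed

theorem lemma1:
  fixes f :: "(int \<Rightarrow> 'a::finite) \<Rightarrow> (int \<Rightarrow> 'a)" and enc :: "'a \<Rightarrow> nat"
  assumes "cellular_automaton f" and "inj enc"
  shows "Sigma11 (word_code enc ` language (asymptotic_set f))"
proof -
  obtain r where radius: "\<forall>y z. (\<forall>j\<le>2 * r. y (int j) = z (int j)) \<longrightarrow> f y (int r) = f z (int r)"
    using cellular_automaton_radius[OF assms(1)] by blast
  define M where "M = Suc (Max (range enc))"
  have M: "\<forall>c. enc c < M"
    unfolding M_def by (simp add: le_imp_less_Suc)
  have "recursive_pred (diagram_test M (range enc) (local_table enc r f) r)"
    by (rule recursive_diagram_test) (simp_all add: finite_local_table)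
  then show ?thesis
    unfolding Sigma11_def using asymptotic_language_iff_diagram_test[OF assms M radius] by blast
qed

end
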